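(* Let $\mathbf{Y}$ be a generalised binary matrix and let $(\ell,k)$ be a simplicial $1$ of $\mathbf{Y}$. If $\mathbf{Y}'$ is the generalised binary matrix obtained by removing the simplicial $1$ at $(\ell,k)$, then $i(\mathbf{Y})=i(\mathbf{Y}')+1$ and $br(\mathbf{Y})=br(\mathbf{Y}')+1$.
   Context: A generalised binary matrix is a matrix with entries in $\{0,1,?\}$; a (standard) binary matrix has entries in $\{0,1\}$. For such a matrix $\mathbf{Y}$, $\mathrm{supp}(\mathbf{Y})=\{(i,j): y_{i,j}=1\}$. A rectangle of $\mathbf{Y}$ is a set $I\times J$ of positions (with $I$ a set of rows, $J$ a set of columns) such that no entry $y_{i,j}$ with $(i,j)\in I\times J$ equals $0$. An isolated set of $\mathbf{Y}$ is a subset of $\mathrm{supp}(\mathbf{Y})$ no two distinct elements of which lie in a common rectangle of $\mathbf{Y}$; $i(\mathbf{Y})$ is the maximum size of an isolated set. $br(\mathbf{Y})$ is the minimum number of rectangles of $\mathbf{Y}$ whose union contains $\mathrm{supp}(\mathbf{Y})$ (entries equal to $?$ may be covered but need not be). A position $(\ell,k)\in\mathrm{supp}(\mathbf{Y})$ is a simplicial $1$ of $\mathbf{Y}$ if, with $I=\{i: y_{i,k}\in\{1,?\}\}$ and $J=\{j: y_{\ell,j}\in\{1,?\}\}$, the set $I\times J$ is a rectangle of $\mathbf{Y}$. Removing the simplicial $1$ at $(\ell,k)$ means deleting row $\ell$ and column $k$ of $\mathbf{Y}$ and replacing every remaining entry with position in $I\times J$ by $?$. *)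

theory Defs
  imports Main
begin

text \<open>Entries of a generalised binary matrix: 0, 1 or ?.\<close>
datatype entry = Zero | One | Unk

text \<open>A generalised binary matrix with m rows and n columns is represented by its
dimensions together with an entry function; rows are indexed by {0..<m}, columns by
{0..<n}. Values of the entry function outside this range are irrelevant.\<close>

definition supp :: "nat \<Rightarrow> nat \<Rightarrow> (nat \<Rightarrow> nat \<Rightarrow> entry) \<Rightarrow> (nat \<times> nat) set" where
  "supp m n Y = {(i, j). i < m \<and> j < n \<and> Y i j = One}"

definition is_rectangle :: "nat \<Rightarrow> nat \<Rightarrow> (nat \<Rightarrow> nat \<Rightarrow> entry) \<Rightarrow> nat set \<Rightarrow> nat set \<Rightarrow> bool" where
  "is_rectangle m n Y I J \<longleftrightarrow> I \<subseteq> {0..<m} \<and> J \<subseteq> {0..<n} \<and>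
     (\<forall>i\<in>I. \<forall>j\<in>J. Y i j \<noteq> Zero)"

definition isolated_set :: "nat \<Rightarrow> nat \<Rightarrow> (nat \<Rightarrow> nat \<Rightarrow> entry) \<Rightarrow> (nat \<times> nat) set \<Rightarrow> bool" where
  "isolated_set m n Y S \<longleftrightarrow> S \<subseteq> supp m n Y \<and>
     (\<forall>p\<in>S. \<forall>q\<in>S. p \<noteq> q \<longrightarrow>
        \<not> (\<exists>I J. is_rectangle m n Y I J \<and> p \<in> I \<times> J \<and> q \<in> I \<times> J))"

text \<open>i(Y): maximum size of an isolated set (isolated sets are finite, being subsets of supp).\<close>
definition isol_num :: "nat \<Rightarrow> nat \<Rightarrow> (nat \<Rightarrow> nat \<Rightarrow> entry) \<Rightarrow> nat" where
  "isol_num m n Y = Max (card ` {S. isolated_set m n Y S})"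

definition br :: "nat \<Rightarrow> nat \<Rightarrow> (nat \<Rightarrow> nat \<Rightarrow> entry) \<Rightarrow> nat" where
  "br m n Y = (LEAST r. \<exists>R :: (nat set \<times> nat set) set. finite R \<and> card R = r \<and>
       (\<forall>(I, J)\<in>R. is_rectangle m n Y I J) \<and>
       supp m n Y \<subseteq> (\<Union>(I, J)\<in>R. I \<times> J))"

definition col_set :: "nat \<Rightarrow> (nat \<Rightarrow> nat \<Rightarrow> entry) \<Rightarrow> nat \<Rightarrow> nat set" where
  "col_set m Y k = {i. i < m \<and> Y i k \<noteq> Zero}"

definition row_set :: "nat \<Rightarrow> (nat \<Rightarrow> nat \<Rightarrow> entry) \<Rightarrow> nat \<Rightarrow> nat set" where
  "row_set n Y l = {j. j < n \<and> Y l j \<noteq> Zero}"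

definition simplicial_one :: "nat \<Rightarrow> nat \<Rightarrow> (nat \<Rightarrow> nat \<Rightarrow> entry) \<Rightarrow> nat \<Rightarrow> nat \<Rightarrow> bool" where
  "simplicial_one m n Y l k \<longleftrightarrow> (l, k) \<in> supp m n Y \<and>
     is_rectangle m n Y (col_set m Y k) (row_set n Y l)"

text \<open>Index of the old row/column corresponding to a new one after deleting index d.\<close>
definition skip :: "nat \<Rightarrow> nat \<Rightarrow> nat" where
  "skip d i = (if i < d then i else Suc i)"

text \<open>Removing the simplicial 1 at (l,k) of an m \<times> n matrix gives an (m-1) \<times> (n-1) matrix:
delete row l and column k, and replace entries at positions in I \<times> J by ?.\<close>
definition remove_simplicial :: "nat \<Rightarrow> nat \<Rightarrow> (nat \<Rightarrow> nat \<Rightarrow> entry) \<Rightarrow> nat \<Rightarrow> nat \<Rightarrow> (nat \<Rightarrow> nat \<Rightarrow> entry)" where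
  "remove_simplicial m n Y l k = (\<lambda>i j.
     if skip l i \<in> col_set m Y k \<and> skip k j \<in> row_set n Y l then Unk
     else Y (skip l i) (skip k j))"

end

theory Submission
  imports Defs
begin

text \<open>Let I \<times> J be the simplicial rectangle through (l, k). Reindexing by skip identifies
the positions of Y' with those of Y outside row l and column k; under this identification
supp Y' is supp Y - I \<times> J, and rectangles of Y' and of Y correspond by image and preimage,
because entries outside I \<times> J are unchanged while inside I \<times> J they are nonzero in both.
Every rectangle through (l, k) lies inside I \<times> J. Hence (l, k) shares no rectangle with
a 1 outside I \<times> J, and an isolated set of Y meets I \<times> J at most once: adding (l, k)
to an isolated set of Y' and deleting I \<times> J from one of Y change the size by one.
Dually, adding I \<times> J to a cover of Y' covers Y, and removing the rectangle through (l, k)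
from a cover of Y leaves a cover of Y'.\<close>

lemma skip_neq [simp]: "skip d i \<noteq> d" "d \<noteq> skip d i"
  by (simp_all add: skip_def)

lemma inj_skip: "inj (skip d)"
  by (auto simp: inj_def skip_def split: if_splits)

lemma range_skip: "range (skip d) = - {d}"
proof -
  have "x \<in> range (skip d)" if "x \<noteq> d" for x
  proof (cases "x < d")
    case True
    then show ?thesis by (metis rangeI skip_def)
  next
    case False
    with that have "x = skip d (x - 1)" by (simp add: skip_def)
    then show ?thesis by blast
  qed
  then show ?thesis by auto
qed

lemma skip_less_iff: "d < m \<Longrightarrow> skip d i < m \<longleftrightarrow> i < m - 1"
  by (auto simp: skip_def)

definition skip_pos :: "nat \<Rightarrow> nat \<Rightarrow> nat \<times> nat \<Rightarrow> nat \<times> nat" where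
  "skip_pos l k = (\<lambda>(i, j). (skip l i, skip k j))"

lemma skip_pos_Pair [simp]: "skip_pos l k (i, j) = (skip l i, skip k j)"
  by (simp add: skip_pos_def)

lemma inj_skip_pos: "inj (skip_pos l k)"
  using inj_skip by (auto simp: inj_def skip_pos_def)

lemma skip_pos_in_image_times_iff [simp]:
  "skip_pos l k p \<in> skip l ` A \<times> skip k ` B \<longleftrightarrow> p \<in> A \<times> B"
  using inj_skip by (cases p) (auto simp: inj_image_mem_iff)

lemma skip_pos_in_times_iff: "skip_pos l k p \<in> A \<times> B \<longleftrightarrow> p \<in> skip l -` A \<times> skip k -` B"
  by (cases p) simp

lemma finite_supp: "finite (supp m n Y)"
  by (rule finite_subset[of _ "{0..<m} \<times> {0..<n}"]) (auto simp: supp_def)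

lemma isolated_set_finite: "isolated_set m n Y S \<Longrightarrow> finite S"
  by (meson finite_subset finite_supp isolated_set_def)

lemma finite_card_isolated_sets: "finite (card ` {S. isolated_set m n Y S})"
  by (rule finite_subset[of _ "{0..card (supp m n Y)}"])
     (auto simp: isolated_set_def intro!: card_mono[OF finite_supp])

lemma card_le_isol_num: "isolated_set m n Y S \<Longrightarrow> card S \<le> isol_num m n Y"
  unfolding isol_num_def using finite_card_isolated_sets by (auto intro: Max_ge)

lemma isol_num_attained: "\<exists>S. isolated_set m n Y S \<and> card S = isol_num m n Y"
proof -
  have "isolated_set m n Y {}" by (simp add: isolated_set_def)
  then have "isol_num m n Y \<in> card ` {S. isolated_set m n Y S}"
    unfolding isol_num_def using finite_card_isolated_sets by (intro Max_in) auto
  then show ?thesis by auto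
qed

definition share_rectangle :: "nat \<Rightarrow> nat \<Rightarrow> (nat \<Rightarrow> nat \<Rightarrow> entry) \<Rightarrow> nat \<times> nat \<Rightarrow> nat \<times> nat \<Rightarrow> bool" where
  "share_rectangle m n Y p q \<longleftrightarrow> (\<exists>A B. is_rectangle m n Y A B \<and> p \<in> A \<times> B \<and> q \<in> A \<times> B)"

lemma share_rectangle_commute: "share_rectangle m n Y p q \<longleftrightarrow> share_rectangle m n Y q p"
  unfolding share_rectangle_def by blast

lemma isolated_set_iff:
  "isolated_set m n Y S \<longleftrightarrow> S \<subseteq> supp m n Y \<and>
     (\<forall>p\<in>S. \<forall>q\<in>S. p \<noteq> q \<longrightarrow> \<not> share_rectangle m n Y p q)"
  by (simp add: isolated_set_def share_rectangle_def)

definition cover :: "nat \<Rightarrow> nat \<Rightarrow> (nat \<Rightarrow> nat \<Rightarrow> entry) \<Rightarrow> (nat set \<times> nat set) set \<Rightarrow> bool" where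
  "cover m n Y R \<longleftrightarrow> finite R \<and> (\<forall>(A, B)\<in>R. is_rectangle m n Y A B) \<and>
       supp m n Y \<subseteq> (\<Union>(A, B)\<in>R. A \<times> B)"

lemma cover_finite: "cover m n Y R \<Longrightarrow> finite R"
  by (simp add: cover_def)

lemma cover_rectangle: "cover m n Y R \<Longrightarrow> (A, B) \<in> R \<Longrightarrow> is_rectangle m n Y A B"
  unfolding cover_def by fast

lemma cover_obtain:
  assumes "cover m n Y R" "p \<in> supp m n Y"
  obtains A B where "(A, B) \<in> R" "p \<in> A \<times> B"
  using assms unfolding cover_def by fast

lemma br_le_card: "cover m n Y R \<Longrightarrow> br m n Y \<le> card R"
  unfolding br_def cover_def by (rule Least_le) blast

lemma br_attained: "\<exists>R. cover m n Y R \<and> card R = br m n Y"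
proof -
  have "cover m n Y ((\<lambda>(i, j). ({i}, {j})) ` supp m n Y)"
    using finite_supp by (auto simp: cover_def is_rectangle_def supp_def)
  then have "\<exists>r R. finite R \<and> card R = r \<and> (\<forall>(A, B)\<in>R. is_rectangle m n Y A B) \<and>
      supp m n Y \<subseteq> (\<Union>(A, B)\<in>R. A \<times> B)"
    unfolding cover_def by blast
  then have "\<exists>R. finite R \<and> card R = br m n Y \<and> (\<forall>(A, B)\<in>R. is_rectangle m n Y A B) \<and>
      supp m n Y \<subseteq> (\<Union>(A, B)\<in>R. A \<times> B)"
    unfolding br_def by (rule LeastI_ex)
  then show ?thesis
    unfolding cover_def by blast
qed

lemma rectangle_subset_col_row_set:
  assumes "is_rectangle m n Y A B" "l \<in> A" "k \<in> B"
  shows "A \<times> B \<subseteq> col_set m Y k \<times> row_set n Y l"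
  using assms by (auto simp: is_rectangle_def col_set_def row_set_def)

locale simplicial_removal =
  fixes m n :: nat and Y :: "nat \<Rightarrow> nat \<Rightarrow> entry" and l k :: nat
  assumes simplicial: "simplicial_one m n Y l k"
begin

abbreviation "Y' \<equiv> remove_simplicial m n Y l k"
abbreviation "I \<equiv> col_set m Y k"
abbreviation "J \<equiv> row_set n Y l"

lemma simplicial_supp: "(l, k) \<in> supp m n Y"
  and rectangle_IJ: "is_rectangle m n Y I J"
  using simplicial by (simp_all add: simplicial_one_def)

lemma l_less: "l < m" and k_less: "k < n"
  using simplicial_supp by (simp_all add: supp_def)

lemma removed_eq_Zero_iff: "Y' i j = Zero \<longleftrightarrow> Y (skip l i) (skip k j) = Zero"
  using rectangle_IJ by (auto simp: remove_simplicial_def is_rectangle_def)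

lemma image_supp_removed: "skip_pos l k ` supp (m - 1) (n - 1) Y' = supp m n Y - I \<times> J"
proof
  show "skip_pos l k ` supp (m - 1) (n - 1) Y' \<subseteq> supp m n Y - I \<times> J"
    using l_less k_less
    by (auto simp: supp_def remove_simplicial_def skip_less_iff split: if_splits)
next
  show "supp m n Y - I \<times> J \<subseteq> skip_pos l k ` supp (m - 1) (n - 1) Y'"
  proof
    fix p assume p: "p \<in> supp m n Y - I \<times> J"
    then obtain a b where ab: "p = (a, b)" "a < m" "b < n" "Y a b = One"
      by (auto simp: supp_def)
    \<comment> \<open>a 1 in row l or column k lies in I \<times> J\<close>
    have "a \<noteq> l" "b \<noteq> k"
      using p ab simplicial_supp by (auto simp: supp_def col_set_def row_set_def)
    then obtain i j where "a = skip l i" "b = skip k j"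
      using range_skip by (metis ComplI rangeE singletonD)
    with p ab l_less k_less show "p \<in> skip_pos l k ` supp (m - 1) (n - 1) Y'"
      by (auto simp: supp_def remove_simplicial_def skip_less_iff intro!: image_eqI[of _ _ "(i, j)"])
  qed
qed

lemma rectangle_removed_image:
  "is_rectangle (m - 1) (n - 1) Y' A B \<Longrightarrow> is_rectangle m n Y (skip l ` A) (skip k ` B)"
  using l_less k_less removed_eq_Zero_iff
  by (auto simp: is_rectangle_def skip_less_iff)

lemma rectangle_removed_vimage:
  assumes "is_rectangle m n Y A B"
  shows "is_rectangle (m - 1) (n - 1) Y' (skip l -` A) (skip k -` B)"
proof -
  have "skip l -` A \<subseteq> {0..<m - 1}" "skip k -` B \<subseteq> {0..<n - 1}"
    using assms skip_less_iff[OF l_less] skip_less_iff[OF k_less]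
    by (auto simp: is_rectangle_def)
  then show ?thesis
    using assms removed_eq_Zero_iff by (simp add: is_rectangle_def)
qed

lemma share_rectangle_removed_iff:
  "share_rectangle (m - 1) (n - 1) Y' p q \<longleftrightarrow>
   share_rectangle m n Y (skip_pos l k p) (skip_pos l k q)"
proof
  assume "share_rectangle (m - 1) (n - 1) Y' p q"
  then obtain A B where "is_rectangle (m - 1) (n - 1) Y' A B" "p \<in> A \<times> B" "q \<in> A \<times> B"
    by (auto simp: share_rectangle_def)
  then have "is_rectangle m n Y (skip l ` A) (skip k ` B)"
    "skip_pos l k p \<in> skip l ` A \<times> skip k ` B" "skip_pos l k q \<in> skip l ` A \<times> skip k ` B"
    using rectangle_removed_image by simp_all
  then show "share_rectangle m n Y (skip_pos l k p) (skip_pos l k q)"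
    unfolding share_rectangle_def by metis
next
  assume "share_rectangle m n Y (skip_pos l k p) (skip_pos l k q)"
  then obtain A B where "is_rectangle m n Y A B"
    "skip_pos l k p \<in> A \<times> B" "skip_pos l k q \<in> A \<times> B"
    by (auto simp: share_rectangle_def)
  then have "is_rectangle (m - 1) (n - 1) Y' (skip l -` A) (skip k -` B)"
    "p \<in> skip l -` A \<times> skip k -` B" "q \<in> skip l -` A \<times> skip k -` B"
    using rectangle_removed_vimage by (simp_all add: skip_pos_in_times_iff)
  then show "share_rectangle (m - 1) (n - 1) Y' p q"
    unfolding share_rectangle_def by metis
qed

lemma not_share_rectangle_simplicial:
  "p \<notin> I \<times> J \<Longrightarrow> \<not> share_rectangle m n Y (l, k) p"
  using rectangle_subset_col_row_set by (fastforce simp: share_rectangle_def)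

lemma isolated_set_insert_simplicial:
  assumes "isolated_set (m - 1) (n - 1) Y' S"
  shows "isolated_set m n Y (insert (l, k) (skip_pos l k ` S))"
proof -
  have outside: "skip_pos l k ` S \<subseteq> supp m n Y - I \<times> J"
    using assms image_supp_removed by (auto simp: isolated_set_iff)
  have "\<not> share_rectangle m n Y p q"
    if p: "p \<in> insert (l, k) (skip_pos l k ` S)" and q: "q \<in> insert (l, k) (skip_pos l k ` S)"
      and "p \<noteq> q" for p q
  proof (cases "p = (l, k) \<or> q = (l, k)")
    case True
    then show ?thesis
      using p q \<open>p \<noteq> q\<close> outside not_share_rectangle_simplicial share_rectangle_commute by blast
  next
    case False
    then obtain p' q' where "p' \<in> S" "q' \<in> S" "p = skip_pos l k p'" "q = skip_pos l k q'"
      using p q by auto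
    then show ?thesis
      using assms \<open>p \<noteq> q\<close> share_rectangle_removed_iff by (auto simp: isolated_set_iff)
  qed
  then show ?thesis
    using outside simplicial_supp by (auto simp: isolated_set_iff)
qed

lemma card_insert_simplicial:
  assumes "isolated_set (m - 1) (n - 1) Y' S"
  shows "card (insert (l, k) (skip_pos l k ` S)) = card S + 1"
proof -
  have "finite S"
    using assms by (rule isolated_set_finite)
  moreover have "(l, k) \<notin> skip_pos l k ` S"
    by auto
  ultimately show ?thesis
    using card_image[OF inj_on_subset[OF inj_skip_pos]] by simp
qed

lemma isolated_set_removed_vimage:
  assumes "isolated_set m n Y S"
  shows "isolated_set (m - 1) (n - 1) Y' (skip_pos l k -` (S - I \<times> J))"
proof -
  have "skip_pos l k -` (S - I \<times> J) \<subseteq> skip_pos l k -` (skip_pos l k ` supp (m - 1) (n - 1) Y')"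
    using assms image_supp_removed by (auto simp: isolated_set_iff)
  then have "skip_pos l k -` (S - I \<times> J) \<subseteq> supp (m - 1) (n - 1) Y'"
    by (simp add: inj_vimage_image_eq[OF inj_skip_pos])
  then show ?thesis
    using assms share_rectangle_removed_iff inj_skip_pos
    by (auto simp: isolated_set_iff inj_eq)
qed

lemma card_isolated_le_Suc_removed:
  assumes "isolated_set m n Y S"
  shows "card S \<le> card (skip_pos l k -` (S - I \<times> J)) + 1"
proof -
  have fin: "finite S"
    using assms by (rule isolated_set_finite)
  \<comment> \<open>I \<times> J is a rectangle, so an isolated set meets it at most once\<close>
  have "\<forall>p\<in>S \<inter> I \<times> J. \<forall>q\<in>S \<inter> I \<times> J. p = q"
    using assms rectangle_IJ unfolding isolated_set_iff share_rectangle_def by blast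
  then have "card (S \<inter> I \<times> J) \<le> 1"
    using fin by (simp add: card_le_Suc0_iff_eq)
  moreover have "card S = card (S - I \<times> J) + card (S \<inter> I \<times> J)"
    using fin by (metis Int_Diff_disjoint Un_Diff_Int card_Un_disjoint finite_Diff finite_Int inf_commute)
  moreover have "S - I \<times> J \<subseteq> range (skip_pos l k)"
    using assms image_supp_removed by (auto simp: isolated_set_iff)
  ultimately show ?thesis
    using card_vimage_inj[OF inj_skip_pos] by simp
qed

lemma isol_num_removed: "isol_num m n Y = isol_num (m - 1) (n - 1) Y' + 1"
proof (rule antisym)
  obtain S where S: "isolated_set m n Y S" "card S = isol_num m n Y"
    using isol_num_attained by blast
  have "card S \<le> card (skip_pos l k -` (S - I \<times> J)) + 1"
    using S(1) by (rule card_isolated_le_Suc_removed)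
  also have "\<dots> \<le> isol_num (m - 1) (n - 1) Y' + 1"
    using S(1) isolated_set_removed_vimage card_le_isol_num by simp
  finally show "isol_num m n Y \<le> isol_num (m - 1) (n - 1) Y' + 1"
    using S(2) by simp
next
  obtain S where S: "isolated_set (m - 1) (n - 1) Y' S" "card S = isol_num (m - 1) (n - 1) Y'"
    using isol_num_attained by blast
  have "card (insert (l, k) (skip_pos l k ` S)) \<le> isol_num m n Y"
    using S(1) isolated_set_insert_simplicial card_le_isol_num by blast
  then show "isol_num (m - 1) (n - 1) Y' + 1 \<le> isol_num m n Y"
    using S card_insert_simplicial by simp
qed

lemma cover_insert_simplicial:
  assumes "cover (m - 1) (n - 1) Y' R"
  shows "cover m n Y (insert (I, J) ((\<lambda>(A, B). (skip l ` A, skip k ` B)) ` R))"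
    (is "cover m n Y ?R")
proof -
  have "p \<in> (\<Union>(A, B)\<in>?R. A \<times> B)" if "p \<in> supp m n Y" for p
  proof (cases "p \<in> I \<times> J")
    case True
    then show ?thesis by blast
  next
    case False
    then obtain q where "q \<in> supp (m - 1) (n - 1) Y'" "p = skip_pos l k q"
      using \<open>p \<in> supp m n Y\<close> image_supp_removed by blast
    moreover obtain A B where "(A, B) \<in> R" "q \<in> A \<times> B"
      using assms calculation(1) by (rule cover_obtain)
    ultimately show ?thesis
      by (intro UN_I[of "(skip l ` A, skip k ` B)"]) auto
  qed
  moreover have "\<forall>(A, B)\<in>?R. is_rectangle m n Y A B"
    using assms rectangle_IJ rectangle_removed_image by (auto simp: cover_def)
  ultimately show ?thesis
    using assms unfolding cover_def by blast
qed

lemma cover_removed_vimage: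
  assumes "cover m n Y R" and "(A0, B0) \<in> R" and "(l, k) \<in> A0 \<times> B0"
  shows "cover (m - 1) (n - 1) Y' ((\<lambda>(A, B). (skip l -` A, skip k -` B)) ` (R - {(A0, B0)}))"
    (is "cover _ _ _ ?R")
proof -
  have "is_rectangle m n Y A0 B0"
    using assms(1,2) by (rule cover_rectangle)
  then have "A0 \<times> B0 \<subseteq> I \<times> J"
    using assms(3) rectangle_subset_col_row_set[of m n Y A0 B0 l k] by simp
  have "supp (m - 1) (n - 1) Y' \<subseteq> (\<Union>(A, B)\<in>?R. A \<times> B)"
  proof
    fix p assume p: "p \<in> supp (m - 1) (n - 1) Y'"
    have outside: "skip_pos l k p \<in> supp m n Y - I \<times> J"
      using image_supp_removed imageI[OF p, of "skip_pos l k"] by argo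
    then obtain A B where AB: "(A, B) \<in> R" "skip_pos l k p \<in> A \<times> B"
      using assms(1) cover_obtain by blast
    have "(A, B) \<noteq> (A0, B0)"
    proof
      assume "(A, B) = (A0, B0)"
      then have "skip_pos l k p \<in> I \<times> J"
        using AB(2) \<open>A0 \<times> B0 \<subseteq> I \<times> J\<close> by auto
      with outside show False
        by simp
    qed
    then have "(skip l -` A, skip k -` B) \<in> ?R"
      using AB(1) by (intro image_eqI[of _ _ "(A, B)"]) simp_all
    moreover have "p \<in> skip l -` A \<times> skip k -` B"
      using AB(2) by (simp add: skip_pos_in_times_iff)
    ultimately show "p \<in> (\<Union>(A, B)\<in>?R. A \<times> B)"
      by (intro UN_I[of "(skip l -` A, skip k -` B)"]) simp_all
  qed
  moreover have "\<forall>(A', B')\<in>?R. is_rectangle (m - 1) (n - 1) Y' A' B'"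
  proof
    fix x assume "x \<in> ?R"
    then obtain A B where "(A, B) \<in> R" "x = (skip l -` A, skip k -` B)"
      by auto
    then show "case x of (A', B') \<Rightarrow> is_rectangle (m - 1) (n - 1) Y' A' B'"
      using rectangle_removed_vimage[OF cover_rectangle[OF assms(1)]] by simp
  qed
  moreover have "finite ?R"
    using cover_finite[OF assms(1)] by simp
  ultimately show ?thesis
    unfolding cover_def by blast
qed

lemma br_removed: "br m n Y = br (m - 1) (n - 1) Y' + 1"
proof (rule antisym)
  obtain R where R: "cover (m - 1) (n - 1) Y' R" "card R = br (m - 1) (n - 1) Y'"
    using br_attained by blast
  let ?F = "(\<lambda>(A, B). (skip l ` A, skip k ` B)) ` R"
  have "finite ?F"
    using cover_finite[OF R(1)] by blast
  have "br m n Y \<le> card (insert (I, J) ?F)"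
    using cover_insert_simplicial[OF R(1)] by (rule br_le_card)
  also have "\<dots> \<le> card ?F + 1"
    using \<open>finite ?F\<close> by (simp add: card_insert_if)
  also have "\<dots> \<le> card R + 1"
    using card_image_le[OF cover_finite[OF R(1)]] by simp
  finally show "br m n Y \<le> br (m - 1) (n - 1) Y' + 1"
    using R(2) by simp
next
  obtain R where R: "cover m n Y R" "card R = br m n Y"
    using br_attained by blast
  obtain A0 B0 where A0B0: "(A0, B0) \<in> R" "(l, k) \<in> A0 \<times> B0"
    using cover_obtain[OF R(1) simplicial_supp] by blast
  have "br (m - 1) (n - 1) Y'
      \<le> card ((\<lambda>(A, B). (skip l -` A, skip k -` B)) ` (R - {(A0, B0)}))"
    using cover_removed_vimage[OF R(1) A0B0] by (rule br_le_card)
  also have "\<dots> \<le> card (R - {(A0, B0)})"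
    using cover_finite[OF R(1)] by (simp add: card_image_le)
  finally have "br (m - 1) (n - 1) Y' + 1 \<le> Suc (card (R - {(A0, B0)}))"
    by simp
  also have "\<dots> = br m n Y"
    using card_Suc_Diff1[OF cover_finite[OF R(1)] A0B0(1)] R(2) by simp
  finally show "br (m - 1) (n - 1) Y' + 1 \<le> br m n Y" .
qed

end

theorem lemma1:
  fixes m n l k :: nat and Y :: "nat \<Rightarrow> nat \<Rightarrow> entry"
  assumes "simplicial_one m n Y l k"
  shows "isol_num m n Y = isol_num (m - 1) (n - 1) (remove_simplicial m n Y l k) + 1
       \<and> br m n Y = br (m - 1) (n - 1) (remove_simplicial m n Y l k) + 1"
proof -
  interpret simplicial_removal m n Y l k
    using assms by unfold_locales
  show ?thesis
    using isol_num_removed br_removed by blast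
qed

end
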